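(* Let $\mathbf{d}_{\omega} \in \{-1,1\}^M$ be a random vector with independent entries, each $\pm1$ with probability $1/2$, let $\mathbf{f}_\omega\in\mathbb{C}^W$ be fixed, $\mathbf{A}_\omega=\mathbf{d}_\omega\mathbf{f}_\omega^*$, and let $\mathbf{C}\in\mathbb{C}^{M\times W}$ be fixed. Then \[ \mathbb{E}\, |\langle\mathbf{C},\mathbf{A}_{\omega}\rangle|^2 \mathbf{d}_{\omega}\mathbf{d}_{\omega}^* \preccurlyeq 3\|\mathbf{C}\mathbf{f}_{\omega}\|_2^2 \mathbf{I}_M. \]
   Context: $\langle\mathbf{X},\mathbf{Y}\rangle=\mathrm{tr}(\mathbf{X}\mathbf{Y}^* )$ is the trace inner product, $\preccurlyeq$ is the positive semidefinite order, and $\mathbf{I}_M$ is the $M\times M$ identity. In the paper $\mathbf{f}_\omega$ is a column of a partial Fourier matrix. *)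

theory Defs
  imports "HOL-Analysis.Analysis"
begin

definition sign_vectors :: "(real^'m) set" where
  "sign_vectors = {d. \<forall>i. d $ i = 1 \<or> d $ i = -1}"

text \<open>Expectation of a (matrix-valued) function of a uniformly distributed
  sign vector (independent entries, each +1/-1 with probability 1/2).\<close>
definition sign_expectation :: "(real^'m \<Rightarrow> 'a::real_vector) \<Rightarrow> 'a" where
  "sign_expectation g = (1 / real (card (sign_vectors :: (real^'m) set))) *\<^sub>R
      (\<Sum>d\<in>sign_vectors. g d)"

definition trace_inner :: "complex^'n^'m \<Rightarrow> complex^'n^'m \<Rightarrow> complex" where
  "trace_inner X Y = (\<Sum>i\<in>UNIV. \<Sum>j\<in>UNIV. X $ i $ j * cnj (Y $ i $ j))"

definition outer :: "complex^'m \<Rightarrow> complex^'n \<Rightarrow> complex^'n^'m" where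
  "outer x y = (\<chi> i j. x $ i * cnj (y $ j))"

definition psd_le :: "complex^'m^'m \<Rightarrow> complex^'m^'m \<Rightarrow> bool" where
  "psd_le X Y = (\<forall>x :: complex^'m.
     let q = (\<Sum>i\<in>UNIV. \<Sum>j\<in>UNIV. cnj (x $ i) * (Y - X) $ i $ j * x $ j)
     in Im q = 0 \<and> 0 \<le> Re q)"

end

theory Submission
  imports Defs
begin

text \<open>For a test vector \<open>x\<close>, the quadratic form of the expectation is
  \<open>\<bbbE> |\<langle>d, g\<rangle>|\<^sup>2 |\<langle>d, x\<rangle>|\<^sup>2\<close> with \<open>g = C f\<close>, a fourth moment of Rademacher sums.
  Since \<open>\<bbbE> d\<^sub>k d\<^sub>l d\<^sub>m d\<^sub>n\<close> is 1 when the indices pair up and 0 otherwise, it equals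
  \<open>\<parallel>g\<parallel>\<^sup>2 \<parallel>x\<parallel>\<^sup>2 + |\<Sum> g\<^sub>k x\<^sub>k|\<^sup>2 + |\<Sum> g\<^sub>k cnj x\<^sub>k|\<^sup>2 - 2 \<Sum> |g\<^sub>k|\<^sup>2 |x\<^sub>k|\<^sup>2\<close>,
  and Cauchy-Schwarz bounds each of the two middle terms by \<open>\<parallel>g\<parallel>\<^sup>2 \<parallel>x\<parallel>\<^sup>2\<close>.\<close>

definition flip_sign :: "'m \<Rightarrow> real^'m \<Rightarrow> real^'m" where
  "flip_sign a d = (\<chi> i. if i = a then - d $ i else d $ i)"

lemma flip_sign_in_sign_vectors: "d \<in> sign_vectors \<Longrightarrow> flip_sign a d \<in> sign_vectors"
  by (auto simp: sign_vectors_def flip_sign_def)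

lemma flip_sign_flip_sign [simp]: "flip_sign a (flip_sign a d) = d"
  by (simp add: flip_sign_def vec_eq_iff)

lemma sum_sign_vectors_eq_0_if_odd:
  fixes h :: "real^'m \<Rightarrow> 'a::real_vector"
  assumes negated: "\<And>d. h (flip_sign a d) = - h d"
  shows "(\<Sum>d\<in>sign_vectors. h d) = 0"
proof -
  have "bij_betw (flip_sign a) sign_vectors sign_vectors"
    by (rule bij_betwI[where g = "flip_sign a"]) (auto simp: flip_sign_in_sign_vectors)
  then have "(\<Sum>d\<in>sign_vectors. h d) = (\<Sum>d\<in>sign_vectors. h (flip_sign a d))"
    by (rule sum.reindex_bij_betw[symmetric])
  also have "\<dots> = - (\<Sum>d\<in>sign_vectors. h d)"
    by (simp add: negated sum_negf)
  finally have "2 *\<^sub>R (\<Sum>d\<in>sign_vectors. h d) = 0"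
    by (simp add: scaleR_2 eq_neg_iff_add_eq_0)
  then show ?thesis
    by simp
qed

lemma finite_sign_vectors: "finite (sign_vectors :: (real^'m) set)"
proof -
  have "vec_nth ` (sign_vectors :: (real^'m) set) \<subseteq> PiE UNIV (\<lambda>_. {-1, 1})"
    by (auto simp: sign_vectors_def)
  then have "finite (vec_nth ` (sign_vectors :: (real^'m) set))"
    by (rule finite_subset) (simp add: finite_PiE)
  then show ?thesis
    by (rule finite_imageD) (simp add: inj_on_def vec_eq_iff)
qed

lemma card_sign_vectors_pos: "0 < card (sign_vectors :: (real^'m) set)"
proof -
  have "(1 :: real^'m) \<in> sign_vectors"
    by (simp add: sign_vectors_def)
  then show ?thesis
    using finite_sign_vectors card_gt_0_iff by blast
qed

lemma sign_vectors_square: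
  assumes "d \<in> sign_vectors"
  shows "d $ i * d $ i = 1"
proof -
  from assms have "d $ i = 1 \<or> d $ i = -1"
    by (simp add: sign_vectors_def)
  then show ?thesis
    by auto
qed

lemma sign_expectation_cong:
  "(\<And>d. d \<in> sign_vectors \<Longrightarrow> F d = G d) \<Longrightarrow> sign_expectation F = sign_expectation G"
  by (simp add: sign_expectation_def)

lemma sign_expectation_const: "sign_expectation (\<lambda>_ :: real^'m. c) = c"
  using card_sign_vectors_pos[where 'm = 'm] by (simp add: sign_expectation_def sum_constant_scaleR)

lemma sign_expectation_linear:
  "linear f \<Longrightarrow> f (sign_expectation F) = sign_expectation (\<lambda>d. f (F d))"
  by (simp add: sign_expectation_def linear_scale linear_sum)

lemma sign_expectation_sum:
  "sign_expectation (\<lambda>d. \<Sum>i\<in>I. F i d) = (\<Sum>i\<in>I. sign_expectation (F i))"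
  by (simp add: sign_expectation_def scaleR_sum_right sum.swap[where A = I])

lemma sign_expectation_fourth_moment:
  "sign_expectation (\<lambda>d :: real^'m. d $ k * d $ l * d $ m * d $ n) =
     of_bool ((k = l \<and> m = n) \<or> (k = m \<and> l = n) \<or> (k = n \<and> l = m))"
proof (cases "(k = l \<and> m = n) \<or> (k = m \<and> l = n) \<or> (k = n \<and> l = m)")
  case True
  have "d $ k * d $ l * d $ m * d $ n = 1" if "d \<in> sign_vectors" for d :: "real^'m"
  proof -
    have square: "d $ i * d $ i = 1" for i
      using that by (rule sign_vectors_square)
    from True consider "k = l" "m = n" | "k = m" "l = n" | "k = n" "l = m"
      by blast
    then have "d $ k * d $ l * d $ m * d $ n = (d $ k * d $ k) * (d $ l * d $ l) \<or>
        d $ k * d $ l * d $ m * d $ n = (d $ k * d $ k) * (d $ m * d $ m)"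
      by cases (simp_all add: ac_simps)
    then show ?thesis
      by (simp only: square mult_1 disj_absorb)
  qed
  then have "sign_expectation (\<lambda>d :: real^'m. d $ k * d $ l * d $ m * d $ n) =
      sign_expectation (\<lambda>_ :: real^'m. 1)"
    by (rule sign_expectation_cong)
  then show ?thesis
    by (simp only: True of_bool_eq sign_expectation_const)
next
  case False
  then consider "k \<notin> {l, m, n}" | "l \<notin> {k, m, n}" | "m \<notin> {k, l, n}" | "n \<notin> {k, l, m}"
    by blast
  then have "\<exists>a\<in>{k, l, m, n}. \<forall>d. (flip_sign a d) $ k * (flip_sign a d) $ l * (flip_sign a d) $ m *
      (flip_sign a d) $ n = - (d $ k * d $ l * d $ m * d $ n)"
    by cases (auto simp: flip_sign_def)
  then obtain a where negated: "\<And>d. (flip_sign a d) $ k * (flip_sign a d) $ l * (flip_sign a d) $ m *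
      (flip_sign a d) $ n = - (d $ k * d $ l * d $ m * d $ n)"
    by blast
  have "(\<Sum>d\<in>(sign_vectors :: (real^'m) set). d $ k * d $ l * d $ m * d $ n) = 0"
    by (rule sum_sign_vectors_eq_0_if_odd) (rule negated)
  then show ?thesis
    by (simp only: False of_bool_eq sign_expectation_def scaleR_zero_right)
qed

lemma of_bool_pairing:
  "of_bool ((k = l \<and> m = n) \<or> (k = m \<and> l = n) \<or> (k = n \<and> l = m)) =
     of_bool (k = l \<and> m = n) + of_bool (k = m \<and> l = n) + of_bool (k = n \<and> l = m)
     - 2 * (of_bool (k = l \<and> l = m \<and> m = n) :: 'a::ring_1)"
  by (cases "k = l"; cases "k = m"; cases "k = n"; cases "l = m"; cases "l = n"; cases "m = n") simp_all

lemma sum_pairings: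
  fixes a :: "'m::finite \<Rightarrow> 'm \<Rightarrow> 'm \<Rightarrow> 'm \<Rightarrow> 'a::comm_ring_1"
  shows "(\<Sum>k\<in>UNIV. \<Sum>l\<in>UNIV. \<Sum>m\<in>UNIV. \<Sum>n\<in>UNIV.
      of_bool ((k = l \<and> m = n) \<or> (k = m \<and> l = n) \<or> (k = n \<and> l = m)) * a k l m n) =
    (\<Sum>k\<in>UNIV. \<Sum>m\<in>UNIV. a k k m m) + (\<Sum>k\<in>UNIV. \<Sum>l\<in>UNIV. a k l k l)
      + (\<Sum>k\<in>UNIV. \<Sum>l\<in>UNIV. a k l l k) - 2 * (\<Sum>k\<in>UNIV. a k k k k)"
proof -
  have collapse:
    "of_bool P * z = (if P then z else 0)"
    "(if P \<and> Q then z else 0) = (if P then if Q then z else 0 else 0)"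
    "(\<Sum>i\<in>UNIV. if P then h i else 0) = (if P then sum h UNIV else 0)"
    for P Q and z :: 'a and h :: "'m \<Rightarrow> 'a"
    by simp_all
  show ?thesis
    unfolding of_bool_pairing distrib_right left_diff_distrib mult.assoc sum.distrib sum_subtractf
      sum_distrib_left[symmetric]
    by (simp add: collapse)
qed

lemma power2_norm_vec: "(norm x)\<^sup>2 = (\<Sum>i\<in>UNIV. (norm (x $ i))\<^sup>2)"
  by (simp add: norm_vec_def L2_set_def sum_nonneg)

lemma cmod_sum_mult_square_le:
  assumes "finite A"
  shows "(cmod (\<Sum>k\<in>A. a k * b k))\<^sup>2 \<le> (\<Sum>k\<in>A. (cmod (a k))\<^sup>2) * (\<Sum>k\<in>A. (cmod (b k))\<^sup>2)"
proof -
  have "cmod (\<Sum>k\<in>A. a k * b k) \<le> (\<Sum>k\<in>A. cmod (a k) * cmod (b k))"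
    by (rule order_trans[OF norm_sum]) (simp add: norm_mult)
  then have "(cmod (\<Sum>k\<in>A. a k * b k))\<^sup>2 \<le> (\<Sum>k\<in>A. cmod (a k) * cmod (b k))\<^sup>2"
    by (intro power_mono) auto
  also have "\<dots> \<le> (\<Sum>k\<in>A. (cmod (a k))\<^sup>2) * (\<Sum>k\<in>A. (cmod (b k))\<^sup>2)"
    by (rule Cauchy_Schwarz_ineq_sum)
  finally show ?thesis .
qed

definition rademacher_sum :: "real^'m \<Rightarrow> complex^'m \<Rightarrow> complex" where
  "rademacher_sum d g = (\<Sum>i\<in>UNIV. complex_of_real (d $ i) * g $ i)"

lemma of_real_cmod_square_rademacher_sums_expand:
  fixes g x :: "complex^'m"
  shows "complex_of_real ((cmod (rademacher_sum d g))\<^sup>2 * (cmod (rademacher_sum d x))\<^sup>2) =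
    (\<Sum>k\<in>UNIV. \<Sum>l\<in>UNIV. \<Sum>m\<in>UNIV. \<Sum>n\<in>UNIV.
       complex_of_real (d $ k * d $ l * d $ m * d $ n) * (g $ k * cnj (g $ l) * x $ m * cnj (x $ n)))"
proof -
  have "complex_of_real ((cmod (rademacher_sum d g))\<^sup>2 * (cmod (rademacher_sum d x))\<^sup>2) =
      ((\<Sum>k\<in>UNIV. complex_of_real (d $ k) * g $ k) * (\<Sum>l\<in>UNIV. complex_of_real (d $ l) * cnj (g $ l))) *
      ((\<Sum>m\<in>UNIV. complex_of_real (d $ m) * x $ m) * (\<Sum>n\<in>UNIV. complex_of_real (d $ n) * cnj (x $ n)))"
    by (simp only: rademacher_sum_def of_real_mult complex_norm_square cnj_sum complex_cnj_mult
        complex_cnj_complex_of_real)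
  also have "\<dots> = (\<Sum>k\<in>UNIV. \<Sum>m\<in>UNIV. \<Sum>l\<in>UNIV. \<Sum>n\<in>UNIV.
       complex_of_real (d $ k * d $ l * d $ m * d $ n) * (g $ k * cnj (g $ l) * x $ m * cnj (x $ n)))"
    unfolding sum_product by (intro sum.cong refl) (simp add: ac_simps)
  also have "\<dots> = (\<Sum>k\<in>UNIV. \<Sum>l\<in>UNIV. \<Sum>m\<in>UNIV. \<Sum>n\<in>UNIV.
       complex_of_real (d $ k * d $ l * d $ m * d $ n) * (g $ k * cnj (g $ l) * x $ m * cnj (x $ n)))"
    by (intro sum.cong refl sum.swap)
  finally show ?thesis .
qed

lemma sign_expectation_cmod_square_rademacher_sums:
  fixes g x :: "complex^'m"
  shows "sign_expectation (\<lambda>d. (cmod (rademacher_sum d g))\<^sup>2 * (cmod (rademacher_sum d x))\<^sup>2) =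
    (norm g)\<^sup>2 * (norm x)\<^sup>2 + (cmod (\<Sum>k\<in>UNIV. g $ k * x $ k))\<^sup>2
    + (cmod (\<Sum>k\<in>UNIV. g $ k * cnj (x $ k)))\<^sup>2 - 2 * (\<Sum>k\<in>UNIV. (cmod (g $ k))\<^sup>2 * (cmod (x $ k))\<^sup>2)"
proof -
  define a where "a k l m n = g $ k * cnj (g $ l) * x $ m * cnj (x $ n)" for k l m n
  have linear_times: "linear (\<lambda>r. complex_of_real r * c)" for c
    by (rule linearI) (simp_all add: algebra_simps scaleR_conv_of_real)
  have of_real_of_bool: "complex_of_real (of_bool P) = of_bool P" for P
    by (cases P) simp_all
  have "complex_of_real (sign_expectation (\<lambda>d. (cmod (rademacher_sum d g))\<^sup>2 * (cmod (rademacher_sum d x))\<^sup>2)) =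
      sign_expectation (\<lambda>d. \<Sum>k\<in>UNIV. \<Sum>l\<in>UNIV. \<Sum>m\<in>UNIV. \<Sum>n\<in>UNIV.
        complex_of_real (d $ k * d $ l * d $ m * d $ n) * a k l m n)"
    by (simp only: sign_expectation_linear[OF linear_of_real] of_real_cmod_square_rademacher_sums_expand a_def)
  also have "\<dots> = (\<Sum>k\<in>UNIV. \<Sum>l\<in>UNIV. \<Sum>m\<in>UNIV. \<Sum>n\<in>UNIV.
      of_bool ((k = l \<and> m = n) \<or> (k = m \<and> l = n) \<or> (k = n \<and> l = m)) * a k l m n)"
    by (simp only: sign_expectation_sum sign_expectation_linear[OF linear_times, symmetric]
        sign_expectation_fourth_moment of_real_of_bool)
  also have "\<dots> = (\<Sum>k\<in>UNIV. \<Sum>m\<in>UNIV. a k k m m) + (\<Sum>k\<in>UNIV. \<Sum>l\<in>UNIV. a k l k l)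
      + (\<Sum>k\<in>UNIV. \<Sum>l\<in>UNIV. a k l l k) - 2 * (\<Sum>k\<in>UNIV. a k k k k)"
    by (rule sum_pairings)
  also have "\<dots> = complex_of_real ((norm g)\<^sup>2 * (norm x)\<^sup>2 + (cmod (\<Sum>k\<in>UNIV. g $ k * x $ k))\<^sup>2
    + (cmod (\<Sum>k\<in>UNIV. g $ k * cnj (x $ k)))\<^sup>2 - 2 * (\<Sum>k\<in>UNIV. (cmod (g $ k))\<^sup>2 * (cmod (x $ k))\<^sup>2))"
  proof -
    have "(\<Sum>k\<in>UNIV. \<Sum>m\<in>UNIV. a k k m m) = complex_of_real ((norm g)\<^sup>2 * (norm x)\<^sup>2)"
      unfolding a_def power2_norm_vec of_real_mult of_real_sum
      by (simp add: sum_product complex_norm_square ac_simps del: of_real_power)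
    moreover have "(\<Sum>k\<in>UNIV. \<Sum>l\<in>UNIV. a k l k l) = complex_of_real ((cmod (\<Sum>k\<in>UNIV. g $ k * x $ k))\<^sup>2)"
      unfolding a_def complex_norm_square cnj_sum complex_cnj_mult
      by (simp add: sum_product ac_simps)
    moreover have "(\<Sum>k\<in>UNIV. \<Sum>l\<in>UNIV. a k l l k) =
        complex_of_real ((cmod (\<Sum>k\<in>UNIV. g $ k * cnj (x $ k)))\<^sup>2)"
      unfolding a_def complex_norm_square cnj_sum complex_cnj_mult complex_cnj_cnj
      by (simp add: sum_product ac_simps)
    moreover have "(\<Sum>k\<in>UNIV. a k k k k) = complex_of_real (\<Sum>k\<in>UNIV. (cmod (g $ k))\<^sup>2 * (cmod (x $ k))\<^sup>2)"
      unfolding a_def of_real_sum of_real_mult complex_norm_square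
      by (simp add: ac_simps)
    ultimately show ?thesis
      by simp
  qed
  finally show ?thesis
    using of_real_eq_iff by blast
qed

lemma sign_expectation_cmod_square_rademacher_sums_le:
  fixes g x :: "complex^'m"
  shows "sign_expectation (\<lambda>d. (cmod (rademacher_sum d g))\<^sup>2 * (cmod (rademacher_sum d x))\<^sup>2)
    \<le> 3 * (norm g)\<^sup>2 * (norm x)\<^sup>2"
proof -
  have "(cmod (\<Sum>k\<in>UNIV. g $ k * x $ k))\<^sup>2 \<le> (norm g)\<^sup>2 * (norm x)\<^sup>2"
    using cmod_sum_mult_square_le[of UNIV "\<lambda>k. g $ k" "\<lambda>k. x $ k"] by (simp add: power2_norm_vec)
  moreover have "(cmod (\<Sum>k\<in>UNIV. g $ k * cnj (x $ k)))\<^sup>2 \<le> (norm g)\<^sup>2 * (norm x)\<^sup>2"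
    using cmod_sum_mult_square_le[of UNIV "\<lambda>k. g $ k" "\<lambda>k. cnj (x $ k)"] by (simp add: power2_norm_vec)
  moreover have "0 \<le> (\<Sum>k\<in>UNIV. (cmod (g $ k))\<^sup>2 * (cmod (x $ k))\<^sup>2)"
    by (intro sum_nonneg) simp
  ultimately show ?thesis
    unfolding sign_expectation_cmod_square_rademacher_sums by linarith
qed

definition quad_form :: "complex^'m^'m \<Rightarrow> complex^'m \<Rightarrow> complex" where
  "quad_form M x = (\<Sum>i\<in>UNIV. \<Sum>j\<in>UNIV. cnj (x $ i) * M $ i $ j * x $ j)"

lemma psd_le_iff_quad_form:
  "psd_le X Y \<longleftrightarrow> (\<forall>x. Im (quad_form (Y - X) x) = 0 \<and> 0 \<le> Re (quad_form (Y - X) x))"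
  by (simp add: psd_le_def quad_form_def)

lemma linear_quad_form: "linear (\<lambda>M. quad_form M x)"
  by (rule linearI) (simp_all add: quad_form_def algebra_simps sum.distrib scaleR_sum_right)

lemma quad_form_mat_1: "quad_form (mat 1) x = complex_of_real ((norm x)\<^sup>2)"
  by (simp add: quad_form_def mat_def power2_norm_vec complex_norm_square of_real_sum if_distrib
      if_distribR mult.commute cong: if_cong del: of_real_power)

lemma quad_form_outer:
  "quad_form (outer y y) x = complex_of_real ((cmod (\<Sum>i\<in>UNIV. cnj (y $ i) * x $ i))\<^sup>2)"
  unfolding quad_form_def outer_def complex_norm_square cnj_sum complex_cnj_mult complex_cnj_cnj
    sum_product
  by (subst sum.swap) (simp add: ac_simps)

theorem lemma4:
  fixes f :: "complex^'w" and C :: "complex^'w^'m"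
  shows "psd_le
    (sign_expectation (\<lambda>d :: real^'m.
        (cmod (trace_inner C (outer (\<chi> i. complex_of_real (d $ i)) f)))\<^sup>2 *\<^sub>R
        outer (\<chi> i. complex_of_real (d $ i)) (\<chi> i. complex_of_real (d $ i))))
    ((3 * (norm (C *v f))\<^sup>2) *\<^sub>R mat 1)"
proof -
  define g where "g = C *v f"
  have trace_inner_eq: "trace_inner C (outer (\<chi> i. complex_of_real (d $ i)) f) = rademacher_sum d g" for d :: "real^'m"
    unfolding trace_inner_def outer_def matrix_vector_mult_def rademacher_sum_def g_def
    by (simp add: sum_distrib_left ac_simps)
  have quad_form_sign_outer: "quad_form (outer (\<chi> i. complex_of_real (d $ i)) (\<chi> i. complex_of_real (d $ i))) x =
      complex_of_real ((cmod (rademacher_sum d x))\<^sup>2)" for d :: "real^'m" and x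
    by (simp add: quad_form_outer rademacher_sum_def)
  have "quad_form ((3 * (norm g)\<^sup>2) *\<^sub>R mat 1 - sign_expectation (\<lambda>d :: real^'m.
        (cmod (trace_inner C (outer (\<chi> i. complex_of_real (d $ i)) f)))\<^sup>2 *\<^sub>R
        outer (\<chi> i. complex_of_real (d $ i)) (\<chi> i. complex_of_real (d $ i)))) x =
      complex_of_real (3 * (norm g)\<^sup>2 * (norm x)\<^sup>2
        - sign_expectation (\<lambda>d. (cmod (rademacher_sum d g))\<^sup>2 * (cmod (rademacher_sum d x))\<^sup>2))" for x
    unfolding linear_diff[OF linear_quad_form] linear_scale[OF linear_quad_form]
      sign_expectation_linear[OF linear_quad_form] quad_form_mat_1 trace_inner_eq
      quad_form_sign_outer
    by (simp add: scaleR_conv_of_real sign_expectation_linear[OF linear_of_real])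
  with sign_expectation_cmod_square_rademacher_sums_le[of g] show ?thesis
    unfolding psd_le_iff_quad_form g_def[symmetric] by simp
qed

end
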